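(* The map $\Phi:\mathcal{C}\to\bar{\mathbf K}$, $C\mapsto K_C$, is a bijection, and its inverse is given by $\Phi^{-1}(K)=C_K$ for all $K\in\bar{\mathbf K}$.
   Context: Let $\mathcal{X}$ be a nonempty set and let $\mathscr{V}$ be the real vector space of all functions $u:\mathcal{X}\to\mathbb{R}$ (options), with pointwise operations. For $u,v\in\mathscr{V}$, $u\le v$ iff $u(x)\le v(x)$ for all $x\in\mathcal{X}$, and $u<v$ iff $u\le v$ and $u\neq v$. Let $\mathscr{V}_{>0}=\{u\in\mathscr{V}:0<u\}$ and $\mathscr{V}^s_{>0}=\{\{u\}:u\in\mathscr{V}_{>0}\}$. Let $\mathscr{Q}$ be the set of all finite subsets of $\mathscr{V}$ (including $\emptyset$). For $A\in\mathscr{Q}$ and $u\in\mathscr{V}$, $A-u=\{v-u:v\in A\}$. For a positive integer $n$, $\mathbb{R}^{n,+}=\{\boldsymbol\lambda\in\mathbb{R}^n:\lambda_j\ge0\ \forall j,\ \sum_j\lambda_j>0\}$, and for $\boldsymbol\lambda\in\mathbb{R}^n$, $\mathbf u=(u_1,\dots,u_n)\in\mathscr{V}^n$, $\boldsymbol\lambda\mathbf u=\sum_{j=1}^n\lambda_ju_j$. A choice function is a map $C:\mathscr{Q}\to\mathscr{Q}$ with $C(A)\subseteq A$ for all $A$; its rejection function is $R_C(A)=A\setminus C(A)$, and $K_C=\{A\in\mathscr{Q}:0\notin C(A\cup\{0\})\}$. $C$ is coherent if: (C0) $C(A)\neq\emptyset$ for all nonempty $A\in\mathscr{Q}$; (C1)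 for all $A\in\mathscr{Q}$ and $u\in A$: $u\in C(A)\iff 0\in C(A-u)$; (C2) $\{u\}\in K_C$ for all $u\in\mathscr{V}_{>0}$; (C3) for all $A,B\in K_C$ and all maps $\boldsymbol\lambda:A\times B\to\mathbb{R}^{2,+}$, $\{\boldsymbol\lambda(\mathbf u)\mathbf u:\mathbf u\in A\times B\}\in K_C$; (C4) $A\subseteq B\Rightarrow R_C(A)\subseteq R_C(B)$ for all $A,B\in\mathscr{Q}$. $\mathcal{C}$ denotes the set of coherent choice functions. A set of desirable option sets is any $K\subseteq\mathscr{Q}$. It is coherent if for all $A,B\in K$: (K0) $A\setminus\{0\}\in K$; (K1) $\{0\}\notin K$; (K2) $\mathscr{V}^s_{>0}\subseteq K$; (K3) $\{\boldsymbol\lambda(\mathbf u)\mathbf u:\mathbf u\in A\times B\}\in K$ for every map $\boldsymbol\lambda:A\times B\to\mathbb{R}^{2,+}$; (K4) $A\cup Q\in K$ for all $Q\in\mathscr{Q}$. $\bar{\mathbf K}$ denotes the set of coherent sets of desirable option sets. For $K\subseteq\mathscr{Q}$, the choice function $C_K$ is defined by $C_K(A)=\{u\in A:(A-u)\setminus\{0\}\notin K\}$ for all $A\in\mathscr{Q}$. *)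

theory Defs
  imports Complex_Main
begin

type_synonym 'x opt = "'x \<Rightarrow> real"

definition zopt :: "'x opt" where "zopt = (\<lambda>x. 0)"

definition Qsets :: "'x opt set set" where
  "Qsets = {A. finite A}"

definition Vpos :: "'x opt set" where
  "Vpos = {u. (\<forall>x. 0 \<le> u x) \<and> u \<noteq> zopt}"

definition Vpos_s :: "'x opt set set" where
  "Vpos_s = {{u} | u. u \<in> Vpos}"

definition R2plus :: "(real \<times> real) set" where
  "R2plus = {(a, b). a \<ge> 0 \<and> b \<ge> 0 \<and> a + b > 0}"

definition shift :: "'x opt set \<Rightarrow> 'x opt \<Rightarrow> 'x opt set" where
  "shift A u = (\<lambda>v. (\<lambda>x. v x - u x)) ` A"

definition comb :: "'x opt set \<Rightarrow> 'x opt set \<Rightarrow> ('x opt \<times> 'x opt \<Rightarrow> real \<times> real) \<Rightarrow> 'x opt set" where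
  "comb A B lam = {(\<lambda>x. fst (lam p) * fst p x + snd (lam p) * snd p x) | p. p \<in> A \<times> B}"

text \<open>Choice functions are maps Q \<rightarrow> Q; represented as functions on all option sets
  that are fixed to be empty outside Q (so that they are determined by their values on Q).\<close>
definition choice_fun :: "('x opt set \<Rightarrow> 'x opt set) \<Rightarrow> bool" where
  "choice_fun C \<longleftrightarrow> (\<forall>A \<in> Qsets. C A \<subseteq> A) \<and> (\<forall>A. A \<notin> Qsets \<longrightarrow> C A = {})"

definition rej :: "('x opt set \<Rightarrow> 'x opt set) \<Rightarrow> 'x opt set \<Rightarrow> 'x opt set" where
  "rej C A = A - C A"

definition K_of :: "('x opt set \<Rightarrow> 'x opt set) \<Rightarrow> 'x opt set set" where
  "K_of C = {A \<in> Qsets. zopt \<notin> C (A \<union> {zopt})}"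

definition coherent_choice :: "('x opt set \<Rightarrow> 'x opt set) \<Rightarrow> bool" where
  "coherent_choice C \<longleftrightarrow> choice_fun C
    \<and> (\<forall>A \<in> Qsets. A \<noteq> {} \<longrightarrow> C A \<noteq> {})
    \<and> (\<forall>A \<in> Qsets. \<forall>u \<in> A. u \<in> C A \<longleftrightarrow> zopt \<in> C (shift A u))
    \<and> (\<forall>u \<in> Vpos. {u} \<in> K_of C)
    \<and> (\<forall>A \<in> K_of C. \<forall>B \<in> K_of C. \<forall>lam. (\<forall>p \<in> A \<times> B. lam p \<in> R2plus)
           \<longrightarrow> comb A B lam \<in> K_of C)
    \<and> (\<forall>A \<in> Qsets. \<forall>B \<in> Qsets. A \<subseteq> B \<longrightarrow> rej C A \<subseteq> rej C B)"

definition CohC :: "('x opt set \<Rightarrow> 'x opt set) set" where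
  "CohC = {C. coherent_choice C}"

definition coherent_K :: "'x opt set set \<Rightarrow> bool" where
  "coherent_K K \<longleftrightarrow> K \<subseteq> Qsets
    \<and> (\<forall>A \<in> K. A - {zopt} \<in> K)
    \<and> {zopt} \<notin> K
    \<and> Vpos_s \<subseteq> K
    \<and> (\<forall>A \<in> K. \<forall>B \<in> K. \<forall>lam. (\<forall>p \<in> A \<times> B. lam p \<in> R2plus) \<longrightarrow> comb A B lam \<in> K)
    \<and> (\<forall>A \<in> K. \<forall>Q \<in> Qsets. A \<union> Q \<in> K)"

definition CohK :: "'x opt set set set" where
  "CohK = {K. coherent_K K}"

definition C_of :: "'x opt set set \<Rightarrow> 'x opt set \<Rightarrow> 'x opt set" where
  "C_of K A = (if A \<in> Qsets then {u \<in> A. shift A u - {zopt} \<notin> K} else {})"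

end

theory Submission
  imports Defs
begin

text \<open>By (C1), an option u is chosen from A exactly when 0 is chosen from A - u, i.e. when
  (A - u) \ {0} is not in K_C; so C is recovered from K_C as C_{K_C}, and conversely
  K_{C_K} = K because membership in a coherent K is insensitive to the option 0.
  What remains is coherence of C_K, where only (C0) needs an idea: if every option of A were
  rejected, then (K3), applied to the rejection sets of two options u and v, shows that u stays
  rejected once v is removed from A; removing options one by one leaves a singleton {u} with
  (A - u) \ {0} empty, and then (K4) puts {0} into K, against (K1).\<close>

lemma shift_zopt [simp]: "shift A zopt = A"
  by (simp add: shift_def zopt_def)

lemma zopt_in_shift: "u \<in> A \<Longrightarrow> zopt \<in> shift A u"
  unfolding shift_def zopt_def by (rule image_eqI[of _ _ u]) auto

lemma shift_in_Qsets: "A \<in> Qsets \<Longrightarrow> shift A u \<in> Qsets"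
  by (simp add: Qsets_def shift_def)

lemma shift_singleton_self: "shift {u} u = {zopt}"
  by (simp add: shift_def zopt_def)

lemma shift_mono: "A \<subseteq> B \<Longrightarrow> shift A u \<subseteq> shift B u"
  by (auto simp: shift_def)

lemma
  assumes "coherent_K K"
  shows coherent_K_subset_Qsets: "K \<subseteq> Qsets"
    and coherent_K_Diff_zopt: "A \<in> K \<Longrightarrow> A - {zopt} \<in> K"
    and coherent_K_zopt_notin: "{zopt} \<notin> K"
    and coherent_K_Vpos_s: "Vpos_s \<subseteq> K"
    and coherent_K_comb:
      "A \<in> K \<Longrightarrow> B \<in> K \<Longrightarrow> (\<forall>p \<in> A \<times> B. lam p \<in> R2plus) \<Longrightarrow> comb A B lam \<in> K"
    and coherent_K_Un: "A \<in> K \<Longrightarrow> Q \<in> Qsets \<Longrightarrow> A \<union> Q \<in> K"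
  using assms by (simp_all add: coherent_K_def)

lemma coherent_K_Diff_zopt_iff:
  assumes "coherent_K K" and "A \<in> Qsets"
  shows "A - {zopt} \<in> K \<longleftrightarrow> A \<in> K"
proof
  assume "A - {zopt} \<in> K"
  then have "(A - {zopt}) \<union> A \<in> K" using coherent_K_Un[OF assms(1)] assms(2) by blast
  then show "A \<in> K" by (simp add: Un_absorb1)
qed (rule coherent_K_Diff_zopt[OF assms(1)])

lemma coherent_K_empty_notin:
  assumes "coherent_K K"
  shows "{} \<notin> K"
proof
  assume "{} \<in> K"
  then have "{} \<union> {zopt} \<in> K" by (rule coherent_K_Un[OF assms]) (simp add: Qsets_def)
  then show False using coherent_K_zopt_notin[OF assms] by simp
qed

lemma K_of_C_of:
  assumes "coherent_K K"
  shows "K_of (C_of K) = K"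
proof -
  have chosen_iff: "zopt \<notin> C_of K (A \<union> {zopt}) \<longleftrightarrow> A \<in> K" if "A \<in> Qsets" for A
  proof -
    have "A \<union> {zopt} \<in> Qsets" using that by (simp add: Qsets_def)
    then have "zopt \<notin> C_of K (A \<union> {zopt}) \<longleftrightarrow> A \<union> {zopt} - {zopt} \<in> K"
      unfolding C_of_def by simp
    also have "\<dots> \<longleftrightarrow> A - {zopt} \<in> K" by simp
    also have "\<dots> \<longleftrightarrow> A \<in> K" using coherent_K_Diff_zopt_iff[OF assms that] .
    finally show ?thesis .
  qed
  have "K \<subseteq> Qsets" using coherent_K_subset_Qsets[OF assms] .
  show ?thesis
  proof (rule set_eqI)
    fix A
    have "A \<in> K_of (C_of K) \<longleftrightarrow> A \<in> Qsets \<and> zopt \<notin> C_of K (A \<union> {zopt})"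
      by (simp add: K_of_def)
    then show "A \<in> K_of (C_of K) \<longleftrightarrow> A \<in> K"
      using chosen_iff[of A] \<open>K \<subseteq> Qsets\<close> by blast
  qed
qed

lemma C_of_K_of:
  assumes "coherent_choice C"
  shows "C_of (K_of C) = C"
proof
  fix A
  have choice: "choice_fun C"
    and C1: "\<forall>A \<in> Qsets. \<forall>u \<in> A. u \<in> C A \<longleftrightarrow> zopt \<in> C (shift A u)"
    using assms unfolding coherent_choice_def by auto
  show "C_of (K_of C) A = C A"
  proof (cases "A \<in> Qsets")
    case False
    then show ?thesis using choice unfolding choice_fun_def C_of_def by auto
  next
    case True
    have "u \<in> C A \<longleftrightarrow> shift A u - {zopt} \<notin> K_of C" if "u \<in> A" for u
    proof -
      have "shift A u - {zopt} \<union> {zopt} = shift A u" using zopt_in_shift[OF that] by auto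
      moreover have "shift A u - {zopt} \<in> Qsets"
        using shift_in_Qsets[OF True] by (simp add: Qsets_def)
      ultimately show ?thesis using C1 True that unfolding K_of_def by auto
    qed
    moreover have "C A \<subseteq> A" using choice True unfolding choice_fun_def by auto
    ultimately show ?thesis using True unfolding C_of_def by auto
  qed
qed

lemma coherent_K_K_of:
  assumes "coherent_choice C"
  shows "coherent_K (K_of C)"
proof -
  have choice: "choice_fun C" and C0: "\<forall>A \<in> Qsets. A \<noteq> {} \<longrightarrow> C A \<noteq> {}"
    and C2: "\<forall>u \<in> Vpos. {u} \<in> K_of C"
    and C3: "\<forall>A \<in> K_of C. \<forall>B \<in> K_of C. \<forall>lam. (\<forall>p \<in> A \<times> B. lam p \<in> R2plus)
           \<longrightarrow> comb A B lam \<in> K_of C"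
    and C4: "\<forall>A \<in> Qsets. \<forall>B \<in> Qsets. A \<subseteq> B \<longrightarrow> rej C A \<subseteq> rej C B"
    using assms unfolding coherent_choice_def by auto
  have "\<forall>A \<in> K_of C. A - {zopt} \<in> K_of C"
  proof
    fix A assume "A \<in> K_of C"
    moreover have "A - {zopt} \<union> {zopt} = A \<union> {zopt}" by auto
    ultimately show "A - {zopt} \<in> K_of C" unfolding K_of_def Qsets_def by auto
  qed
  moreover have "{zopt} \<notin> K_of C"
  proof
    assume "{zopt} \<in> K_of C"
    then have "zopt \<notin> C {zopt}" unfolding K_of_def by auto
    moreover have "C {zopt} \<noteq> {}" using C0 by (auto simp: Qsets_def)
    moreover have "C {zopt} \<subseteq> {zopt}" using choice by (auto simp: choice_fun_def Qsets_def)
    ultimately show False by auto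
  qed
  moreover have "\<forall>A \<in> K_of C. \<forall>Q \<in> Qsets. A \<union> Q \<in> K_of C"
  proof (intro ballI)
    fix A Q :: "'a opt set" assume A: "A \<in> K_of C" and Q: "Q \<in> Qsets"
    have fin: "A \<union> {zopt} \<in> Qsets" "A \<union> Q \<union> {zopt} \<in> Qsets" "A \<union> Q \<in> Qsets"
      using A Q by (auto simp: K_of_def Qsets_def)
    have "zopt \<in> rej C (A \<union> {zopt})" using A unfolding K_of_def rej_def by auto
    also have "rej C (A \<union> {zopt}) \<subseteq> rej C (A \<union> Q \<union> {zopt})"
      by (rule C4[rule_format, OF fin(1,2)]) auto
    finally show "A \<union> Q \<in> K_of C" using fin unfolding K_of_def rej_def by auto
  qed
  moreover have "K_of C \<subseteq> Qsets" unfolding K_of_def by blast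
  moreover have "Vpos_s \<subseteq> K_of C" using C2 unfolding Vpos_s_def by blast
  ultimately show ?thesis using C3 by (simp only: coherent_K_def simp_thms)
qed

text \<open>The combination keeps every element of the first set except v - u, which it replaces
  by (v - u) + (w - v) = w - u for the nonzero elements w - v of the second set.\<close>

lemma coherent_K_rejected_remove:
  assumes K: "coherent_K K" and fin: "finite F" and "v \<notin> F" and "u \<in> F"
    and rej_u: "shift (insert v F) u - {zopt} \<in> K"
    and rej_v: "shift (insert v F) v - {zopt} \<in> K"
  shows "shift F u - {zopt} \<in> K"
proof -
  define Au where "Au = shift (insert v F) u - {zopt}"
  define Av where "Av = shift (insert v F) v - {zopt}"
  define lam :: "'a opt \<times> 'a opt \<Rightarrow> real \<times> real"
    where "lam p = (if fst p = (\<lambda>x. v x - u x) then (1, 1) else (1, 0))" for p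
  have comb_in_K: "comb Au Av lam \<in> K"
    using coherent_K_comb[OF K rej_u rej_v] unfolding Au_def Av_def by (simp add: lam_def R2plus_def)
  have comb_subset: "comb Au Av lam \<subseteq> shift F u"
  proof
    fix w assume "w \<in> comb Au Av lam"
    then obtain p where p: "p \<in> Au \<times> Av"
      and w: "w = (\<lambda>x. fst (lam p) * fst p x + snd (lam p) * snd p x)"
      unfolding comb_def by blast
    have "fst p \<in> shift (insert v F) u" and "snd p \<in> shift (insert v F) v"
      and "snd p \<noteq> zopt" using p unfolding Au_def Av_def by auto
    obtain a where a: "a \<in> insert v F" and pa: "fst p = (\<lambda>x. a x - u x)"
      using \<open>fst p \<in> shift (insert v F) u\<close> unfolding shift_def by blast
    obtain b where b: "b \<in> insert v F" and pb: "snd p = (\<lambda>x. b x - v x)"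
      using \<open>snd p \<in> shift (insert v F) v\<close> unfolding shift_def by blast
    have w: "w = (\<lambda>x. fst (lam (\<lambda>x. a x - u x, \<lambda>x. b x - v x)) * (a x - u x)
                    + snd (lam (\<lambda>x. a x - u x, \<lambda>x. b x - v x)) * (b x - v x))"
      using w prod_eqI[of p "(\<lambda>x. a x - u x, \<lambda>x. b x - v x)"] pa pb by simp
    have "b \<in> F" using b pb \<open>snd p \<noteq> zopt\<close> by (auto simp: zopt_def)
    show "w \<in> shift F u"
    proof (cases "(\<lambda>x. a x - u x) = (\<lambda>x. v x - u x)")
      case True
      then have "w = (\<lambda>x. b x - u x)" using w by (auto simp: lam_def fun_eq_iff)
      then show ?thesis using \<open>b \<in> F\<close> unfolding shift_def by auto
    next
      case False
      then have "a \<in> F" using a by auto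
      moreover have "w = (\<lambda>x. a x - u x)" using w False by (auto simp: lam_def)
      ultimately show ?thesis unfolding shift_def by auto
    qed
  qed
  have "shift F u \<in> Qsets" using fin by (simp add: Qsets_def shift_def)
  with comb_in_K have "comb Au Av lam \<union> shift F u \<in> K" by (rule coherent_K_Un[OF K])
  with comb_subset have "shift F u \<in> K" by (simp add: Un_absorb1)
  then show ?thesis by (rule coherent_K_Diff_zopt[OF K])
qed

lemma coherent_K_not_all_rejected:
  assumes K: "coherent_K K" and "finite A" and "A \<noteq> {}"
  shows "\<exists>u \<in> A. shift A u - {zopt} \<notin> K"
  using \<open>finite A\<close> \<open>A \<noteq> {}\<close>
proof (induction A rule: finite_ne_induct)
  case (singleton u)
  show ?case using coherent_K_empty_notin[OF K] by (simp add: shift_singleton_self)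
next
  case (insert v F)
  then show ?case using coherent_K_rejected_remove[OF K \<open>finite F\<close> \<open>v \<notin> F\<close>] by blast
qed

lemma coherent_choice_C_of:
  assumes K: "coherent_K K"
  shows "coherent_choice (C_of K)"
proof -
  have "choice_fun (C_of K)" unfolding choice_fun_def C_of_def by auto
  moreover have "\<forall>A \<in> Qsets. A \<noteq> {} \<longrightarrow> C_of K A \<noteq> {}"
    using coherent_K_not_all_rejected[OF K] unfolding C_of_def Qsets_def by fastforce
  moreover have "\<forall>A \<in> Qsets. \<forall>u \<in> A. u \<in> C_of K A \<longleftrightarrow> zopt \<in> C_of K (shift A u)"
    using shift_in_Qsets zopt_in_shift unfolding C_of_def by auto
  moreover have "\<forall>A \<in> Qsets. \<forall>B \<in> Qsets. A \<subseteq> B \<longrightarrow> rej (C_of K) A \<subseteq> rej (C_of K) B"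
  proof (intro ballI impI subsetI)
    fix A B u assume "A \<in> Qsets" "B \<in> Qsets" "A \<subseteq> B" and "u \<in> rej (C_of K) A"
    then have "u \<in> A" and "shift A u - {zopt} \<in> K" unfolding rej_def C_of_def by auto
    then have "(shift A u - {zopt}) \<union> (shift B u - {zopt}) \<in> K"
      using coherent_K_Un[OF K] shift_in_Qsets[OF \<open>B \<in> Qsets\<close>] by (simp add: Qsets_def)
    moreover have "(shift A u - {zopt}) \<union> (shift B u - {zopt}) = shift B u - {zopt}"
      using shift_mono[OF \<open>A \<subseteq> B\<close>] by auto
    ultimately show "u \<in> rej (C_of K) B"
      using \<open>B \<in> Qsets\<close> \<open>A \<subseteq> B\<close> \<open>u \<in> A\<close> unfolding rej_def C_of_def by auto
  qed
  moreover have "\<forall>u \<in> Vpos. {u} \<in> K_of (C_of K)"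
    using coherent_K_Vpos_s[OF K] unfolding K_of_C_of[OF K] Vpos_s_def by blast
  moreover have "\<forall>A \<in> K_of (C_of K). \<forall>B \<in> K_of (C_of K). \<forall>lam.
      (\<forall>p \<in> A \<times> B. lam p \<in> R2plus) \<longrightarrow> comb A B lam \<in> K_of (C_of K)"
    using coherent_K_comb[OF K] unfolding K_of_C_of[OF K] by blast
  ultimately show ?thesis by (simp only: coherent_choice_def simp_thms)
qed

theorem theorem2:
  shows "bij_betw (K_of :: ('x opt set \<Rightarrow> 'x opt set) \<Rightarrow> 'x opt set set) CohC CohK
         \<and> (\<forall>K \<in> (CohK :: 'x opt set set set). inv_into CohC K_of K = C_of K)"
proof -
  have bij: "bij_betw (K_of :: ('x opt set \<Rightarrow> 'x opt set) \<Rightarrow> 'x opt set set) CohC CohK"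
    by (rule bij_betw_byWitness[where f' = C_of])
      (auto simp: CohC_def CohK_def C_of_K_of K_of_C_of coherent_K_K_of coherent_choice_C_of)
  moreover have "inv_into CohC K_of K = C_of K" if "K \<in> (CohK :: 'x opt set set set)" for K
    using that bij_betw_imp_inj_on[OF bij]
    by (intro inv_into_f_eq) (auto simp: CohC_def CohK_def coherent_choice_C_of K_of_C_of)
  ultimately show ?thesis by blast
qed

end
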